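(* Let $\varepsilon>0$, $\delta\in(0,1)$, $\Delta>0$, and let $v$ be a real-valued function on datasets with sensitivity $\Delta$, i.e. $|v(D)-v(D')|\le\Delta$ for all neighboring datasets $D,D'$. Let $h:=\delta/(1+e^{\varepsilon})$ and let $q_h$ denote the absolute value of the $h$-quantile of the Laplace distribution $\mathrm{Lap}(\Delta/\varepsilon)$. Set $\tau:=q_h$. Consider the PositiveLaplaceMechanism which, on dataset $D$, samples $\eta\sim\mathrm{Lap}(\Delta/\varepsilon)$, sets $\tilde v:=v(D)+\tau+\eta$, and outputs $\max(v(D),\tilde v)$. Then this mechanism is $(\varepsilon,\delta)$-differentially private.
   Context: $\mathrm{Lap}(b)$ is the Laplace distribution with mean $0$ and scale $b$, with density $\frac{1}{2b}e^{-|x|/b}$. The $\phi$-quantile of a distribution is the value $x$ with $\Pr[X\le x]=\phi$. Two datasets are neighboring if they differ by replacing the contribution of one individual. A randomized algorithm $M$ is $(\varepsilon,\delta)$-differentially private if for every pair of neighboring datasets $D,D'$ and every measurable set $S$, $\Pr[M(D)\in S]\le e^{\varepsilon}\Pr[M(D')\in S]+\delta$ and symmetrically with $D,D'$ swapped. *)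

theory Defs
  imports "HOL-Probability.Probability"
begin

definition laplace :: "real \<Rightarrow> real measure" where
  "laplace b = density lborel (\<lambda>x. ennreal (1 / (2 * b) * exp (- \<bar>x\<bar> / b)))"

definition quantile :: "real measure \<Rightarrow> real \<Rightarrow> real" where
  "quantile M phi = (THE x. measure M {..x} = phi)"

definition neighboring :: "'a list \<Rightarrow> 'a list \<Rightarrow> bool" where
  "neighboring D D' \<longleftrightarrow> length D = length D' \<and>
     (\<exists>i<length D. \<forall>j<length D. j \<noteq> i \<longrightarrow> D ! j = D' ! j)"

definition sensitivity_bounded :: "('a list \<Rightarrow> real) \<Rightarrow> real \<Rightarrow> bool" where
  "sensitivity_bounded v \<Delta> \<longleftrightarrow> (\<forall>D D'. neighboring D D' \<longrightarrow> \<bar>v D - v D'\<bar> \<le> \<Delta>)"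

definition differentially_private :: "('a list \<Rightarrow> 'b measure) \<Rightarrow> real \<Rightarrow> real \<Rightarrow> bool" where
  "differentially_private M \<epsilon> \<delta> \<longleftrightarrow>
     (\<forall>D D'. neighboring D D' \<longrightarrow>
        (\<forall>S \<in> sets (M D). S \<in> sets (M D') \<longrightarrow>
           measure (M D) S \<le> exp \<epsilon> * measure (M D') S + \<delta> \<and>
           measure (M D') S \<le> exp \<epsilon> * measure (M D) S + \<delta>))"

definition positive_laplace_mechanism ::
  "('a list \<Rightarrow> real) \<Rightarrow> real \<Rightarrow> real \<Rightarrow> real \<Rightarrow> 'a list \<Rightarrow> real measure" where
  "positive_laplace_mechanism v \<Delta> \<epsilon> \<tau> D =
     distr (laplace (\<Delta> / \<epsilon>)) borel (\<lambda>\<eta>. max (v D) (v D + \<tau> + \<eta>))"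

end

theory Submission
  imports Defs
begin

text \<open>Translating the Laplace distribution of scale \<Delta>/\<epsilon> by at most \<Delta> changes its density
  by a factor at most exp \<epsilon>. For neighbouring D, D' the two outputs max (v D) (v D + \<tau> + \<eta>)
  are such translates of each other, except on an event of the form \<eta> \<le> -\<tau> + c with
  0 \<le> c \<le> \<Delta>, where a maximum may be attained at its constant branch. That event is a
  translate of {\<eta> \<le> -\<tau>}, which has probability h by the choice of \<tau>, so it costs at most
  (exp \<epsilon>) h \<le> \<delta>.\<close>

lemma sets_laplace [simp, measurable_cong]: "sets (laplace b) = sets borel"
  by (simp add: laplace_def)

lemma space_laplace [simp]: "space (laplace b) = UNIV"
  by (simp add: laplace_def)

lemma emeasure_laplace:
  assumes "A \<in> sets borel"
  shows "emeasure (laplace b) A =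
    (\<integral>\<^sup>+x. ennreal (1 / (2 * b) * exp (- \<bar>x\<bar> / b)) * indicator A x \<partial>lborel)"
  unfolding laplace_def using assms by (subst emeasure_density) auto

lemma emeasure_laplace_uminus:
  assumes "A \<in> sets borel"
  shows "emeasure (laplace b) (uminus -` A) = emeasure (laplace b) A"
proof -
  have "uminus -` A \<in> sets borel"
    by (rule measurable_sets_borel[OF _ assms]) simp
  then have "emeasure (laplace b) (uminus -` A) =
      (\<integral>\<^sup>+x. ennreal (1 / (2 * b) * exp (- \<bar>0 + -1 * x\<bar> / b)) * indicator A (0 + -1 * x) \<partial>lborel)"
    by (simp add: emeasure_laplace indicator_vimage[symmetric])
  also have "\<dots> = emeasure (laplace b) A"
    using nn_integral_real_affine[of "\<lambda>x. ennreal (1 / (2 * b) * exp (- \<bar>x\<bar> / b)) * indicator A x" "-1" 0]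
      assms by (simp add: emeasure_laplace)
  finally show ?thesis .
qed

lemma emeasure_laplace_atLeast:
  assumes "b > 0" and "a \<ge> 0"
  shows "emeasure (laplace b) {a..} = ennreal (exp (- a / b) / 2)"
proof -
  have "emeasure (laplace b) {a..} =
      (\<integral>\<^sup>+x. ennreal (exp (- x / b) / (2 * b)) * indicator {a..} x \<partial>lborel)"
    using \<open>a \<ge> 0\<close> by (auto simp: emeasure_laplace intro!: nn_integral_cong split: split_indicator)
  also have "\<dots> = ennreal (0 - (- exp (- a / b) / 2))"
  proof (rule nn_integral_FTC_atLeast)
    fix x
    show "((\<lambda>x. - exp (- x / b) / 2) has_real_derivative exp (- x / b) / (2 * b)) (at x)"
      using \<open>b > 0\<close> by (auto intro!: derivative_eq_intros simp: field_simps)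
    show "0 \<le> exp (- x / b) / (2 * b)"
      using \<open>b > 0\<close> by simp
  next
    show "((\<lambda>x. - exp (- x / b) / 2) \<longlongrightarrow> 0) at_top"
      using \<open>b > 0\<close> by real_asymp
  qed simp
  finally show ?thesis by simp
qed

lemma emeasure_laplace_atMost:
  assumes "b > 0" and "a \<le> 0"
  shows "emeasure (laplace b) {..a} = ennreal (exp (a / b) / 2)"
proof -
  have "{..a} = uminus -` {-a..}"
    by auto
  then show ?thesis
    using emeasure_laplace_uminus[of "{-a..}" b] emeasure_laplace_atLeast[of b "-a"] assms
    by simp
qed

lemma finite_measure_laplace:
  assumes "b > 0"
  shows "finite_measure (laplace b)"
proof (rule finite_measureI)
  have "emeasure (laplace b) UNIV \<le> emeasure (laplace b) {..0} + emeasure (laplace b) {0..}"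
    by (rule order_trans[OF _ emeasure_subadditive]) (auto intro: emeasure_mono)
  also have "\<dots> = ennreal (1 / 2) + ennreal (1 / 2)"
    using emeasure_laplace_atMost[OF assms, of 0] emeasure_laplace_atLeast[OF assms, of 0] by simp
  finally show "emeasure (laplace b) (space (laplace b)) \<noteq> \<infinity>"
    by (auto simp: top_unique simp flip: ennreal_plus)
qed

lemma measure_laplace_atMost:
  assumes "b > 0" and "a \<le> 0"
  shows "measure (laplace b) {..a} = exp (a / b) / 2"
  using emeasure_laplace_atMost[OF assms] by (simp add: measure_def)

lemma quantile_laplace:
  assumes "b > 0" and "0 < h" and "h < 1 / 2"
  shows "quantile (laplace b) h = b * ln (2 * h)"
  unfolding quantile_def
proof (rule the_equality)
  interpret finite_measure "laplace b"
    using finite_measure_laplace[OF \<open>b > 0\<close>] .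
  have "b * ln (2 * h) \<le> 0"
    using assms by (simp add: mult_nonneg_nonpos)
  from measure_laplace_atMost[OF \<open>b > 0\<close> this]
  show "measure (laplace b) {..b * ln (2 * h)} = h"
    using assms by simp
  fix y
  assume y: "measure (laplace b) {..y} = h"
  have "y \<le> 0"
  proof (rule ccontr)
    assume "\<not> y \<le> 0"
    then have "measure (laplace b) {..0} \<le> measure (laplace b) {..y}"
      by (intro finite_measure_mono) auto
    then show False
      using y measure_laplace_atMost[OF \<open>b > 0\<close>, of 0] \<open>h < 1 / 2\<close> by simp
  qed
  then have "exp (y / b) = 2 * h"
    using measure_laplace_atMost[OF \<open>b > 0\<close> \<open>y \<le> 0\<close>] y by simp
  then have "y / b = ln (2 * h)"
    by (metis ln_exp)
  then show "y = b * ln (2 * h)"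
    using \<open>b > 0\<close> by (simp add: field_simps)
qed

lemma measure_laplace_atMost_neg_abs_quantile:
  assumes "b > 0" and "0 < h" and "h < 1 / 2"
  shows "measure (laplace b) {..- \<bar>quantile (laplace b) h\<bar>} = h"
proof -
  have "b * ln (2 * h) \<le> 0"
    using assms by (simp add: mult_nonneg_nonpos)
  with measure_laplace_atMost[OF \<open>b > 0\<close> this] show ?thesis
    using assms by (simp add: quantile_laplace)
qed

lemma laplace_shift_le:
  assumes "b > 0" and "\<bar>c\<bar> \<le> \<epsilon> * b"
    and A: "A \<in> sets borel" and B: "B \<in> sets borel" and AB: "(\<lambda>x. x + c) ` A \<subseteq> B"
  shows "measure (laplace b) A \<le> exp \<epsilon> * measure (laplace b) B"
proof -
  interpret finite_measure "laplace b"
    using finite_measure_laplace[OF \<open>b > 0\<close>] .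
  define p where "p x = 1 / (2 * b) * exp (- \<bar>x\<bar> / b)" for x
  have p_shift: "p x \<le> exp \<epsilon> * p (c + x)" for x
  proof -
    have "- \<bar>x\<bar> / b \<le> \<epsilon> + - \<bar>c + x\<bar> / b"
      using assms(1,2) by (simp add: field_simps)
    then have "exp (- \<bar>x\<bar> / b) \<le> exp \<epsilon> * exp (- \<bar>c + x\<bar> / b)"
      by (simp add: exp_add[symmetric])
    then show ?thesis
      using \<open>b > 0\<close> by (simp add: p_def field_simps)
  qed
  have "emeasure (laplace b) A = (\<integral>\<^sup>+x. ennreal (p x) * indicator A x \<partial>lborel)"
    using A by (simp add: emeasure_laplace p_def)
  also have "\<dots> \<le> (\<integral>\<^sup>+x. ennreal (exp \<epsilon>) * (ennreal (p (c + 1 * x)) * indicator B (c + 1 * x)) \<partial>lborel)"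
    using AB p_shift \<open>b > 0\<close>
    by (intro nn_integral_mono)
       (auto split: split_indicator simp: add.commute p_def image_subset_iff
         simp flip: ennreal_mult intro!: ennreal_leI)
  also have "\<dots> = ennreal (exp \<epsilon>) * (\<integral>\<^sup>+x. ennreal (p x) * indicator B x \<partial>lborel)"
    using B nn_integral_real_affine[of "\<lambda>x. ennreal (p x) * indicator B x" 1 c]
    by (simp add: nn_integral_cmult p_def)
  also have "\<dots> = ennreal (exp \<epsilon>) * emeasure (laplace b) B"
    using B by (simp add: emeasure_laplace p_def)
  finally show ?thesis
    by (simp add: emeasure_eq_measure ennreal_mult[symmetric])
qed

lemma measure_max_shifted_laplace_le:
  fixes u u' \<tau> :: real
  assumes "b > 0" and "\<bar>u - u'\<bar> \<le> \<epsilon> * b" and S: "S \<in> sets borel"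
  shows "measure (laplace b) ((\<lambda>\<eta>. max u (u + \<tau> + \<eta>)) -` S)
    \<le> exp \<epsilon> * measure (laplace b) ((\<lambda>\<eta>. max u' (u' + \<tau> + \<eta>)) -` S)
      + exp \<epsilon> * measure (laplace b) {..-\<tau>}"
proof -
  interpret finite_measure "laplace b"
    using finite_measure_laplace[OF \<open>b > 0\<close>] .
  define A where "A = (\<lambda>\<eta>. max u (u + \<tau> + \<eta>)) -` S"
  define A' where "A' = (\<lambda>\<eta>. max u' (u' + \<tau> + \<eta>)) -` S"
  define t where "t = - \<tau> + max 0 (u' - u)"
  have A: "A \<in> sets borel" and A': "A' \<in> sets borel"
    unfolding A_def A'_def by (auto intro!: measurable_sets_borel[OF _ S])
  have "measure (laplace b) A \<le> measure (laplace b) ({..t} \<union> (A \<inter> {t..}))"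
    using A by (intro finite_measure_mono) auto
  also have "\<dots> \<le> measure (laplace b) {..t} + measure (laplace b) (A \<inter> {t..})"
    using A by (intro measure_Un_le) auto
  also have "measure (laplace b) {..t} \<le> exp \<epsilon> * measure (laplace b) {..-\<tau>}"
    using \<open>b > 0\<close> assms(2)
    by (intro laplace_shift_le[where c = "- max 0 (u' - u)"]) (auto simp: t_def)
  also have "measure (laplace b) (A \<inter> {t..}) \<le> exp \<epsilon> * measure (laplace b) A'"
  proof (rule laplace_shift_le[OF \<open>b > 0\<close> _ _ A', where c = "u - u'"])
    show "(\<lambda>x. x + (u - u')) ` (A \<inter> {t..}) \<subseteq> A'"
    proof (rule image_subsetI)
      fix x
      assume "x \<in> A \<inter> {t..}"
      \<comment> \<open>beyond t neither maximum is attained at its constant branch\<close>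
      then have "max u' (u' + \<tau> + (x + (u - u'))) = max u (u + \<tau> + x)"
        by (auto simp: t_def max_def split: if_splits)
      then show "x + (u - u') \<in> A'"
        using \<open>x \<in> A \<inter> {t..}\<close> by (simp add: A_def A'_def)
    qed
  qed (use A assms(2) in auto)
  finally show ?thesis
    by (simp add: A_def A'_def add.commute)
qed

lemma neighboring_sym: "neighboring D D' \<Longrightarrow> neighboring D' D"
  unfolding neighboring_def by metis

lemma sets_positive_laplace_mechanism [simp]:
  "sets (positive_laplace_mechanism v \<Delta> \<epsilon> \<tau> D) = sets borel"
  by (simp add: positive_laplace_mechanism_def)

lemma measure_positive_laplace_mechanism:
  assumes "S \<in> sets borel"
  shows "measure (positive_laplace_mechanism v \<Delta> \<epsilon> \<tau> D) S =
    measure (laplace (\<Delta> / \<epsilon>)) ((\<lambda>\<eta>. max (v D) (v D + \<tau> + \<eta>)) -` S)"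
  unfolding positive_laplace_mechanism_def using assms by (subst measure_distr) auto

theorem theorem3p1:
  fixes v :: "'a list \<Rightarrow> real" and \<epsilon> \<delta> \<Delta> :: real
  assumes "\<epsilon> > 0" and "0 < \<delta>" and "\<delta> < 1" and "\<Delta> > 0"
    and "sensitivity_bounded v \<Delta>"
  defines "h \<equiv> \<delta> / (1 + exp \<epsilon>)"
  defines "\<tau> \<equiv> \<bar>quantile (laplace (\<Delta> / \<epsilon>)) h\<bar>"
  shows "differentially_private (positive_laplace_mechanism v \<Delta> \<epsilon> \<tau>) \<epsilon> \<delta>"
proof -
  define b where "b = \<Delta> / \<epsilon>"
  have "b > 0" and \<Delta>: "\<Delta> = \<epsilon> * b"
    using assms(1,4) by (auto simp: b_def)
  have "2 * \<delta> < 1 + exp \<epsilon>"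
    using assms(3) exp_gt_one[OF assms(1)] by linarith
  then have "0 < h" and "h < 1 / 2" and h_le: "exp \<epsilon> * h \<le> \<delta>"
    using assms(2) by (auto simp: h_def field_simps add_pos_pos)
  have tail: "measure (laplace b) {..-\<tau>} = h"
    unfolding \<tau>_def b_def[symmetric]
    using measure_laplace_atMost_neg_abs_quantile[OF \<open>b > 0\<close> \<open>0 < h\<close> \<open>h < 1 / 2\<close>] .
  have bound: "measure (positive_laplace_mechanism v \<Delta> \<epsilon> \<tau> D) S
      \<le> exp \<epsilon> * measure (positive_laplace_mechanism v \<Delta> \<epsilon> \<tau> D') S + \<delta>"
    if "neighboring D D'" and S: "S \<in> sets borel" for D D' S
  proof -
    have "\<bar>v D - v D'\<bar> \<le> \<epsilon> * b"
      using assms(5) that(1) unfolding sensitivity_bounded_def \<Delta> by blast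
    from measure_max_shifted_laplace_le[OF \<open>b > 0\<close> this S, of \<tau>]
    show ?thesis
      using h_le by (simp add: measure_positive_laplace_mechanism[OF S] tail b_def[symmetric])
  qed
  then show ?thesis
    unfolding differentially_private_def by (auto dest: neighboring_sym)
qed

end
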